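(* For every integer $V\geq 3$ with $V\equiv 1$ or $3\pmod 6$, there exists an equiangular tight frame of $N$ vectors in $\mathbb{C}^M$ with \[ M=\tfrac{1}{6}(V+2)(V+3),\qquad N=\tfrac{1}{2}(V+1)(V+2). \]
   Context: An equiangular tight frame (ETF) of $N$ vectors in $\mathbb{C}^M$ is a sequence $\{\phi_i\}_{i=1}^N$ of nonzero vectors of equal norm such that $|\langle\phi_i,\phi_j\rangle|$ is the same for all $i\neq j$ and $\sum_i\phi_i\phi_i^*$ is a scalar multiple of the identity on $\mathbb{C}^M$. *)

theory Defs
  imports Complex_Main
begin

text \<open>Vectors in C^M are represented as functions nat => complex, where only the
components with index k < M are relevant. A sequence of N vectors is a function
phi :: nat => nat => complex, phi i being the i-th vector (i < N).\<close>

definition cinner :: "nat \<Rightarrow> (nat \<Rightarrow> complex) \<Rightarrow> (nat \<Rightarrow> complex) \<Rightarrow> complex" where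
  "cinner M u v = (\<Sum>k<M. u k * cnj (v k))"

definition is_ETF :: "nat \<Rightarrow> nat \<Rightarrow> (nat \<Rightarrow> nat \<Rightarrow> complex) \<Rightarrow> bool" where
  "is_ETF M N phi \<longleftrightarrow>
     (\<forall>i<N. \<exists>k<M. phi i k \<noteq> 0) \<and>
     (\<forall>i<N. \<forall>j<N. cinner M (phi i) (phi i) = cinner M (phi j) (phi j)) \<and>
     (\<exists>c. \<forall>i<N. \<forall>j<N. i \<noteq> j \<longrightarrow> cmod (cinner M (phi i) (phi j)) = c) \<and>
     (\<exists>A::complex. \<forall>k<M. \<forall>l<M.
        (\<Sum>i<N. phi i k * cnj (phi i l)) = (if k = l then A else 0))"

end

theory Submission
  imports Defs "HOL-Number_Theory.Cong"
begin

text \<open>Let \<open>S\<close> carry a Steiner triple system on \<open>V\<close> points, so that each point lies on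
  \<open>r = (V - 1) / 2\<close> blocks. Take as coordinates the blocks, a point \<open>\<infinity>\<close> and the points, and
  as vectors the pairs \<open>(p, j)\<close> with \<open>j \<le> r\<close> together with \<open>V + 1\<close> further vectors. On the
  blocks through \<open>p\<close> the vector \<open>(p, j)\<close> carries column \<open>j\<close> of rows \<open>1, \<dots>, r\<close> of the Fourier
  matrix of order \<open>r + 1\<close>, and at \<open>p\<close> it has the entry \<open>\<surd>2\<close>; the remaining vectors are the
  columns of the Fourier matrix of order \<open>V + 1\<close>, its rows assigned to the points (scaled by
  \<open>1/\<surd>2\<close>) and to \<open>\<infinity>\<close> (scaled by \<open>\<surd>(3/2)\<close>). Orthogonality of characters makes every
  off-diagonal Gram entry unimodular and the frame operator equal to \<open>3(r + 1)\<close> times the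
  identity. Steiner triple systems with \<open>V \<equiv> 3\<close> and \<open>V \<equiv> 1 (mod 6)\<close> points are supplied by the
  constructions of Bose and Skolem from the commutative quasigroups of halving \<open>x + y\<close>
  modulo \<open>2n + 1\<close>, resp. modulo \<open>2n\<close>.\<close>

section \<open>The Fourier matrix\<close>

definition dft :: "nat \<Rightarrow> nat \<Rightarrow> nat \<Rightarrow> complex" where
  "dft n a b = cis (2 * pi * real a * real b / real n)"

lemma norm_dft [simp]: "norm (dft n a b) = 1"
  by (simp add: dft_def)

lemma dft_nonzero [simp]: "dft n a b \<noteq> 0"
  using norm_dft[of n a b] by (auto simp del: norm_dft)

lemma dft_0 [simp]: "dft n 0 b = 1"
  by (simp add: dft_def)

lemma dft_commute: "dft n a b = dft n b a"
  by (simp add: dft_def mult_ac)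

lemma dft_mult_cnj_self [simp]: "dft n a b * cnj (dft n a b) = 1"
  by (simp add: dft_def cis_cnj cis_mult)

lemma dft_orthogonal:
  assumes "a < n" "a' < n"
  shows "(\<Sum>b<n. dft n a b * cnj (dft n a' b)) = (if a = a' then of_nat n else 0)"
proof (cases "a = a'")
  case False
  then have n: "n > 0" using assms by simp
  define z where "z = cis (2 * pi * (real a - real a') / n)"
  have "inj_on (\<lambda>k. cis (2 * pi * real k / real n)) {..<n}"
    using bij_betw_roots_unity[OF n] by (simp add: bij_betw_def)
  then have "cis (2 * pi * real a / n) \<noteq> cis (2 * pi * real a' / n)"
    using inj_onD assms False by fastforce
  moreover have "z = cis (2 * pi * real a / n) / cis (2 * pi * real a' / n)"
    by (simp add: z_def cis_divide diff_divide_distrib algebra_simps)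
  ultimately have "z \<noteq> 1" by simp
  have "z ^ n = cis (2 * pi * real_of_int (int a - int a'))"
    using n by (simp add: z_def DeMoivre)
  also have "\<dots> = 1" by (rule cis_multiple_2pi) simp
  finally have "z ^ n = 1" .
  have "dft n a b * cnj (dft n a' b) = z ^ b" for b
    by (simp add: dft_def z_def cis_cnj cis_mult DeMoivre algebra_simps add_divide_distrib diff_divide_distrib)
  then have "(\<Sum>b<n. dft n a b * cnj (dft n a' b)) = (\<Sum>b<n. z ^ b)" by simp
  also have "\<dots> = 0" using geometric_sum[OF \<open>z \<noteq> 1\<close>, of n] \<open>z ^ n = 1\<close> by simp
  finally show ?thesis using False by simp
qed simp

lemma sum_dft_row:
  assumes "0 < a" "a < n"
  shows "(\<Sum>b<n. dft n a b) = 0"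
  using dft_orthogonal[of a n 0] assms by simp

lemma dft_orthogonal_nonzero_rows:
  assumes "b < n" "b' < n"
  shows "(\<Sum>a\<in>{1..<n}. dft n a b * cnj (dft n a b')) = (if b = b' then of_nat n else 0) - 1"
proof -
  have "{..<n} = insert 0 {1..<n}" using assms by auto
  then have "(\<Sum>a<n. dft n a b * cnj (dft n a b')) = 1 + (\<Sum>a\<in>{1..<n}. dft n a b * cnj (dft n a b'))"
    by simp
  moreover have "(\<Sum>a<n. dft n a b * cnj (dft n a b')) = (if b = b' then of_nat n else 0)"
    using dft_orthogonal[OF assms] by (simp add: dft_commute)
  ultimately show ?thesis by (simp add: algebra_simps)
qed

section \<open>Frames indexed by finite sets\<close>

definition ETF_on :: "'x set \<Rightarrow> 'y set \<Rightarrow> ('y \<Rightarrow> 'x \<Rightarrow> complex) \<Rightarrow> bool" where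
  "ETF_on X Y psi \<longleftrightarrow>
     (\<forall>y\<in>Y. \<exists>x\<in>X. psi y x \<noteq> 0) \<and>
     (\<exists>c. \<forall>y\<in>Y. (\<Sum>x\<in>X. psi y x * cnj (psi y x)) = c) \<and>
     (\<exists>c. \<forall>y\<in>Y. \<forall>y'\<in>Y. y \<noteq> y' \<longrightarrow> cmod (\<Sum>x\<in>X. psi y x * cnj (psi y' x)) = c) \<and>
     (\<exists>A. \<forall>x\<in>X. \<forall>x'\<in>X. (\<Sum>y\<in>Y. psi y x * cnj (psi y x')) = (if x = x' then A else 0))"

lemma is_ETF_if_ETF_on:
  assumes "finite X" "finite Y" "ETF_on X Y psi"
  shows "\<exists>phi. is_ETF (card X) (card Y) phi"
proof -
  obtain g where g: "bij_betw g {..<card X} X"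
    using ex_bij_betw_nat_finite[OF assms(1)] by (auto simp: atLeast0LessThan)
  obtain h where h: "bij_betw h {..<card Y} Y"
    using ex_bij_betw_nat_finite[OF assms(2)] by (auto simp: atLeast0LessThan)
  define phi where "phi i k = psi (h i) (g k)" for i k
  have inner: "cinner (card X) (phi i) (phi j) = (\<Sum>x\<in>X. psi (h i) x * cnj (psi (h j) x))" for i j
    unfolding cinner_def phi_def by (rule sum.reindex_bij_betw[OF g])
  have frame: "(\<Sum>i<card Y. phi i k * cnj (phi i l)) = (\<Sum>y\<in>Y. psi y (g k) * cnj (psi y (g l)))" for k l
    unfolding phi_def by (rule sum.reindex_bij_betw[OF h])
  have g_surj: "\<exists>k<card X. x = g k" if "x \<in> X" for x
  proof -
    have "x \<in> g ` {..<card X}" using g that by (simp add: bij_betw_def)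
    then show ?thesis by auto
  qed
  have gX: "k < card X \<Longrightarrow> g k \<in> X" and hY: "i < card Y \<Longrightarrow> h i \<in> Y" for k i
    using g h by (auto simp: bij_betw_def)
  have g_inj: "k < card X \<Longrightarrow> l < card X \<Longrightarrow> g k = g l \<longleftrightarrow> k = l" for k l
    using g by (auto simp: bij_betw_def inj_on_def)
  have h_inj: "i < card Y \<Longrightarrow> j < card Y \<Longrightarrow> h i = h j \<longleftrightarrow> i = j" for i j
    using h by (auto simp: bij_betw_def inj_on_def)
  obtain c0 c A where
    nz: "\<forall>y\<in>Y. \<exists>x\<in>X. psi y x \<noteq> 0" and
    norms: "\<forall>y\<in>Y. (\<Sum>x\<in>X. psi y x * cnj (psi y x)) = c0" and
    angles: "\<forall>y\<in>Y. \<forall>y'\<in>Y. y \<noteq> y' \<longrightarrow> cmod (\<Sum>x\<in>X. psi y x * cnj (psi y' x)) = c" and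
    tight: "\<forall>x\<in>X. \<forall>x'\<in>X. (\<Sum>y\<in>Y. psi y x * cnj (psi y x')) = (if x = x' then A else 0)"
    using assms(3) unfolding ETF_on_def by blast
  have "\<exists>k<card X. phi i k \<noteq> 0" if i: "i < card Y" for i
  proof -
    obtain x where "x \<in> X" "psi (h i) x \<noteq> 0" using nz hY[OF i] by blast
    moreover from \<open>x \<in> X\<close> obtain k where "k < card X" "x = g k" using g_surj by blast
    ultimately show ?thesis unfolding phi_def by blast
  qed
  then have "\<forall>i<card Y. \<exists>k<card X. phi i k \<noteq> 0" by blast
  moreover have "\<forall>i<card Y. \<forall>j<card Y. cinner (card X) (phi i) (phi i) = cinner (card X) (phi j) (phi j)"
    using norms hY by (simp add: inner)
  moreover have "\<forall>i<card Y. \<forall>j<card Y. i \<noteq> j \<longrightarrow> cmod (cinner (card X) (phi i) (phi j)) = c"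
    using angles hY h_inj by (simp add: inner)
  moreover have "\<forall>k<card X. \<forall>l<card X. (\<Sum>i<card Y. phi i k * cnj (phi i l)) = (if k = l then A else 0)"
    using tight gX g_inj by (simp add: frame)
  ultimately have "is_ETF (card X) (card Y) phi" unfolding is_ETF_def by blast
  then show ?thesis by blast
qed

section \<open>Steiner triple systems\<close>

lemma card_distinct_pairs:
  assumes "finite A"
  shows "card {(x, y). x \<in> A \<and> y \<in> A \<and> x \<noteq> y} = card A * card A - card A"
proof -
  have "{(x, y). x \<in> A \<and> y \<in> A \<and> x \<noteq> y} = A \<times> A - (\<lambda>x. (x, x)) ` A" by auto
  moreover have "card ((\<lambda>x. (x, x)) ` A) = card A" by (rule card_image) (auto simp: inj_on_def)
  moreover have "(\<lambda>x. (x, x)) ` A \<subseteq> A \<times> A" by auto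
  ultimately show ?thesis using assms by (simp add: card_Diff_subset card_cartesian_product)
qed

text \<open>A Steiner triple system is given by its Steiner quasigroup: for distinct points \<open>x\<close>, \<open>y\<close>,
  \<open>third x y\<close> is the third point of the unique block containing them.\<close>

locale steiner_triple_system =
  fixes S :: "'a set" and third :: "'a \<Rightarrow> 'a \<Rightarrow> 'a"
  assumes finite_points: "finite S"
    and third_closed: "x \<in> S \<Longrightarrow> y \<in> S \<Longrightarrow> x \<noteq> y \<Longrightarrow> third x y \<in> S"
    and third_neq: "x \<in> S \<Longrightarrow> y \<in> S \<Longrightarrow> x \<noteq> y \<Longrightarrow> third x y \<noteq> x"
    and third_commute: "x \<in> S \<Longrightarrow> y \<in> S \<Longrightarrow> x \<noteq> y \<Longrightarrow> third x y = third y x"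
    and third_third: "x \<in> S \<Longrightarrow> y \<in> S \<Longrightarrow> x \<noteq> y \<Longrightarrow> third x (third x y) = y"
begin

definition block :: "'a \<Rightarrow> 'a \<Rightarrow> 'a set" where
  "block x y = {x, y, third x y}"

definition blocks :: "'a set set" where
  "blocks = {block x y | x y. x \<in> S \<and> y \<in> S \<and> x \<noteq> y}"

definition blocks_through :: "'a \<Rightarrow> 'a set set" where
  "blocks_through p = {B \<in> blocks. p \<in> B}"

definition replication :: nat where
  "replication = (card S - 1) div 2"

lemma block_eq:
  assumes "x \<in> S" "y \<in> S" "x \<noteq> y" "a \<in> block x y" "b \<in> block x y" "a \<noteq> b"
  shows "block a b = block x y"
proof -
  have "third x y \<noteq> y" using assms third_neq[of y x] third_commute by auto
  moreover have "third x (third x y) = y" "third y (third x y) = x"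
    using assms third_third third_third[of y x] third_commute by auto
  moreover have "third (third x y) x = y" "third (third x y) y = x" "third y x = third x y"
    using calculation assms third_closed third_neq third_commute by metis+
  ultimately show ?thesis using assms unfolding block_def by auto
qed

lemma block_in_blocks: "x \<in> S \<Longrightarrow> y \<in> S \<Longrightarrow> x \<noteq> y \<Longrightarrow> block x y \<in> blocks"
  unfolding blocks_def by blast

lemma blocks_subset: "B \<in> blocks \<Longrightarrow> B \<subseteq> S"
  unfolding blocks_def block_def using third_closed by auto

lemma finite_blocks: "finite blocks"
proof (rule finite_subset)
  show "blocks \<subseteq> Pow S" using blocks_subset by blast
qed (simp add: finite_points)

lemma finite_block: "B \<in> blocks \<Longrightarrow> finite B"
  using blocks_subset finite_points finite_subset by blast

lemma card_block:
  assumes "B \<in> blocks"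
  shows "card B = 3"
proof -
  obtain x y where "x \<in> S" "y \<in> S" "x \<noteq> y" "B = {x, y, third x y}"
    using assms unfolding blocks_def block_def by blast
  moreover from calculation have "third x y \<noteq> x" "third x y \<noteq> y"
    using third_neq third_neq[of y x] third_commute by auto
  ultimately show ?thesis by simp
qed

lemma block_unique: "B \<in> blocks \<Longrightarrow> a \<in> B \<Longrightarrow> b \<in> B \<Longrightarrow> a \<noteq> b \<Longrightarrow> B = block a b"
  unfolding blocks_def using block_eq by blast

lemma blocks_through_pair:
  "p \<in> S \<Longrightarrow> q \<in> S \<Longrightarrow> p \<noteq> q \<Longrightarrow> {B \<in> blocks. p \<in> B \<and> q \<in> B} = {block p q}"
  using block_unique block_in_blocks unfolding block_def by auto

lemma two_card_blocks_through:
  assumes "p \<in> S"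
  shows "2 * card (blocks_through p) = card S - 1"
proof -
  have partition: "S - {p} = (\<Union>B\<in>blocks_through p. B - {p})"
    using assms block_in_blocks blocks_subset unfolding blocks_through_def block_def by blast
  have disjoint: "(B - {p}) \<inter> (B' - {p}) = {}"
    if "B \<in> blocks_through p" "B' \<in> blocks_through p" "B \<noteq> B'" for B B'
    using that block_unique[of B p] block_unique[of B' p] by (auto simp: blocks_through_def)
  have "card (S - {p}) = (\<Sum>B\<in>blocks_through p. card (B - {p}))"
    unfolding partition
    by (rule card_UN_disjoint) (use finite_blocks finite_block disjoint in \<open>auto simp: blocks_through_def\<close>)
  also have "\<dots> = (\<Sum>B\<in>blocks_through p. 2)"
    by (rule sum.cong) (auto simp: blocks_through_def card_block finite_block)
  finally show ?thesis using assms finite_points by simp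
qed

lemma card_blocks_through: "p \<in> S \<Longrightarrow> card (blocks_through p) = replication"
  using two_card_blocks_through unfolding replication_def by fastforce

lemma card_points: "S \<noteq> {} \<Longrightarrow> card S = 2 * replication + 1"
  using two_card_blocks_through card_blocks_through finite_points
  by (metis card_gt_0_iff equals0I Suc_pred' add.commute plus_1_eq_Suc)

lemma card_blocks: "6 * card blocks = card S * card S - card S"
proof -
  let ?pairs = "\<lambda>A. {(x, y). x \<in> A \<and> y \<in> A \<and> x \<noteq> y}"
  have partition: "?pairs S = (\<Union>B\<in>blocks. ?pairs B)"
    using block_in_blocks blocks_subset unfolding block_def by blast
  have "card (?pairs S) = (\<Sum>B\<in>blocks. card (?pairs B))"
    unfolding partition
  proof (rule card_UN_disjoint)
    show "\<forall>B\<in>blocks. finite (?pairs B)"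
      using finite_block by (auto intro: finite_subset[of _ "_ \<times> _"])
  qed (use finite_blocks block_unique in blast)+
  also have "\<dots> = (\<Sum>B\<in>blocks. 6)"
    by (rule sum.cong) (simp_all add: card_distinct_pairs finite_block card_block)
  finally show ?thesis using card_distinct_pairs[OF finite_points] by simp
qed

end

section \<open>Commutative quasigroups\<close>

locale comm_quasigroup =
  fixes Q :: "'a set" and mult :: "'a \<Rightarrow> 'a \<Rightarrow> 'a"
  assumes finite_carrier: "finite Q"
    and mult_closed: "x \<in> Q \<Longrightarrow> y \<in> Q \<Longrightarrow> mult x y \<in> Q"
    and mult_commute: "x \<in> Q \<Longrightarrow> y \<in> Q \<Longrightarrow> mult x y = mult y x"
    and mult_left_cancel: "x \<in> Q \<Longrightarrow> y \<in> Q \<Longrightarrow> z \<in> Q \<Longrightarrow> mult x y = mult x z \<Longrightarrow> y = z"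
begin

definition ldiv :: "'a \<Rightarrow> 'a \<Rightarrow> 'a" where
  "ldiv x w = the_inv_into Q (mult x) w"

lemma inj_on_mult: "x \<in> Q \<Longrightarrow> inj_on (mult x) Q"
  using mult_left_cancel by (meson inj_onI)

lemma image_mult: "x \<in> Q \<Longrightarrow> mult x ` Q = Q"
  using endo_inj_surj[OF finite_carrier _ inj_on_mult] mult_closed by blast

lemma ldiv_closed: "x \<in> Q \<Longrightarrow> w \<in> Q \<Longrightarrow> ldiv x w \<in> Q"
  unfolding ldiv_def by (rule the_inv_into_into) (simp_all add: inj_on_mult image_mult)

lemma mult_ldiv: "x \<in> Q \<Longrightarrow> w \<in> Q \<Longrightarrow> mult x (ldiv x w) = w"
  unfolding ldiv_def by (rule f_the_inv_into_f) (simp_all add: inj_on_mult image_mult)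

lemma ldiv_mult: "x \<in> Q \<Longrightarrow> y \<in> Q \<Longrightarrow> ldiv x (mult x y) = y"
  unfolding ldiv_def by (rule the_inv_into_f_f) (simp_all add: inj_on_mult)

lemma ldiv_eq_iff: "x \<in> Q \<Longrightarrow> y \<in> Q \<Longrightarrow> w \<in> Q \<Longrightarrow> ldiv x w = y \<longleftrightarrow> mult x y = w"
  using mult_ldiv ldiv_mult by metis

lemma mult_left_cancel_iff: "x \<in> Q \<Longrightarrow> y \<in> Q \<Longrightarrow> z \<in> Q \<Longrightarrow> mult x y = mult x z \<longleftrightarrow> y = z"
  using mult_left_cancel by blast

lemma ldiv_ldiv: "x \<in> Q \<Longrightarrow> y \<in> Q \<Longrightarrow> ldiv (ldiv y x) x = y"
  by (metis ldiv_closed ldiv_eq_iff mult_commute mult_ldiv)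

end

subsection \<open>Bose's construction\<close>

locale idempotent_comm_quasigroup = comm_quasigroup +
  assumes mult_idem: "x \<in> Q \<Longrightarrow> mult x x = x"
begin

lemma mult_eq_left_iff [simp]: "x \<in> Q \<Longrightarrow> y \<in> Q \<Longrightarrow> mult x y = x \<longleftrightarrow> y = x"
  and left_eq_mult_iff [simp]: "x \<in> Q \<Longrightarrow> y \<in> Q \<Longrightarrow> x = mult x y \<longleftrightarrow> y = x"
  using mult_left_cancel_iff[of x y x] mult_idem by auto

lemma ldiv_eq_left_iff [simp]: "x \<in> Q \<Longrightarrow> w \<in> Q \<Longrightarrow> ldiv x w = x \<longleftrightarrow> w = x"
  and left_eq_ldiv_iff [simp]: "x \<in> Q \<Longrightarrow> w \<in> Q \<Longrightarrow> x = ldiv x w \<longleftrightarrow> w = x"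
  using ldiv_eq_iff[of x x w] mult_idem by auto

lemma ldiv_eq_right_iff [simp]: "x \<in> Q \<Longrightarrow> y \<in> Q \<Longrightarrow> ldiv y x = x \<longleftrightarrow> y = x"
  and right_eq_ldiv_iff [simp]: "x \<in> Q \<Longrightarrow> y \<in> Q \<Longrightarrow> x = ldiv y x \<longleftrightarrow> y = x"
  using ldiv_eq_iff[of y x x] mult_commute by auto

text \<open>The points are the pairs \<open>(x, i)\<close> with \<open>i < 3\<close>; the blocks are \<open>{(x, 0), (x, 1), (x, 2)}\<close>
  and \<open>{(x, i), (y, i), (x \<cdot> y, i + 1)}\<close> for \<open>x \<noteq> y\<close>, indices taken modulo 3.\<close>

definition bose_third :: "'a \<times> nat \<Rightarrow> 'a \<times> nat \<Rightarrow> 'a \<times> nat" where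
  "bose_third = (\<lambda>(x, i) (y, j).
     if i = j then (mult x y, (i + 1) mod 3)
     else if x = y then (x, 3 - i - j)
     else if j = (i + 1) mod 3 then (ldiv x y, i)
     else (ldiv y x, j))"

theorem steiner_triple_system_bose: "steiner_triple_system (Q \<times> {0::nat, 1, 2}) bose_third"
proof
  fix a b assume "a \<in> Q \<times> {0::nat, 1, 2}" "b \<in> Q \<times> {0, 1, 2}" "a \<noteq> b"
  moreover obtain x i y j where "a = (x, i)" "b = (y, j)" by fastforce
  ultimately have ab: "a = (x, i)" "b = (y, j)" "x \<in> Q" "y \<in> Q" "i \<in> {0, 1, 2}" "j \<in> {0, 1, 2}"
    by simp_all
  show "bose_third a b \<in> Q \<times> {0, 1, 2}"
    using ab(3-6) unfolding ab(1,2) bose_third_def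
    by (simp add: mult_closed ldiv_closed) (elim disjE; simp)
  show "bose_third a b \<noteq> a"
    using ab(3-6) \<open>a \<noteq> b\<close> unfolding ab(1,2) bose_third_def
    by (simp add: mult_closed ldiv_closed) (elim disjE; simp)
  show "bose_third a b = bose_third b a"
    using ab(3-6) unfolding ab(1,2) bose_third_def
    by (simp add: mult_commute) (elim disjE; simp)
  show "bose_third a (bose_third a b) = b"
    using ab(3-6) \<open>a \<noteq> b\<close> unfolding ab(1,2) bose_third_def
    by (simp add: mult_closed ldiv_closed ldiv_mult mult_ldiv ldiv_ldiv) (elim disjE; simp)
qed (use finite_carrier in simp)

end

text \<open>For odd \<open>m\<close>, \<open>(m + 1) div 2\<close> is the inverse of 2 modulo \<open>m\<close>, so this is \<open>(x + y) / 2\<close> in \<open>\<int>/m\<close>.\<close>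

definition midpoint_mod :: "nat \<Rightarrow> nat \<Rightarrow> nat \<Rightarrow> nat" where
  "midpoint_mod m x y = (x + y) * ((m + 1) div 2) mod m"

lemma double_midpoint_mod:
  assumes "odd m"
  shows "[2 * midpoint_mod m x y = x + y] (mod m)"
proof -
  have "2 * ((m + 1) div 2) = m + 1" using assms by simp
  then have "(x + y) * (2 * ((m + 1) div 2)) = (x + y) * m + (x + y)"
    by (simp add: algebra_simps)
  moreover have "[2 * midpoint_mod m x y = (x + y) * (2 * ((m + 1) div 2))] (mod m)"
    unfolding midpoint_mod_def cong_def by (simp add: mod_mult_right_eq mult_ac)
  ultimately show ?thesis by (simp add: cong_def)
qed

lemma idempotent_comm_quasigroup_midpoint_mod:
  assumes "odd m"
  shows "idempotent_comm_quasigroup {..<m} (midpoint_mod m)"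
proof
  fix x y assume "x \<in> {..<m}" "y \<in> {..<m}"
  then show "midpoint_mod m x y \<in> {..<m}" using assms by (auto simp: midpoint_mod_def)
  show "midpoint_mod m x y = midpoint_mod m y x" by (simp add: midpoint_mod_def add.commute)
next
  fix x y z assume "y \<in> {..<m}" "z \<in> {..<m}" "midpoint_mod m x y = midpoint_mod m x z"
  then have "[x + y = x + z] (mod m)"
    using double_midpoint_mod[OF assms, of x y] double_midpoint_mod[OF assms, of x z]
    by (metis cong_sym cong_trans)
  then show "y = z"
    using \<open>y \<in> {..<m}\<close> \<open>z \<in> {..<m}\<close> by (simp add: cong_add_lcancel_nat cong_less_modulus_unique_nat)
next
  fix x assume "x \<in> {..<m}"
  have "[2 * midpoint_mod m x x = 2 * x] (mod m)"
    using double_midpoint_mod[OF assms, of x x] by (simp add: mult_2)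
  then have "[midpoint_mod m x x = x] (mod m)"
    using assms by (simp add: cong_mult_lcancel_nat)
  then show "midpoint_mod m x x = x"
    using \<open>x \<in> {..<m}\<close> unfolding cong_def midpoint_mod_def by simp
qed simp

subsection \<open>Skolem's construction\<close>

locale half_idempotent_comm_quasigroup = comm_quasigroup "{..<2 * n}" mult
  for n :: nat and mult +
  assumes n_pos: "0 < n"
    and mult_self: "x < 2 * n \<Longrightarrow> mult x x = x mod n"
begin

lemma mult_less: "x < 2 * n \<Longrightarrow> y < 2 * n \<Longrightarrow> mult x y < 2 * n"
  and ldiv_less: "x < 2 * n \<Longrightarrow> y < 2 * n \<Longrightarrow> ldiv x y < 2 * n"
  using mult_closed ldiv_closed by simp_all

lemma mod_eq_diff: "n \<le> x \<Longrightarrow> x < 2 * n \<Longrightarrow> x mod n = x - n"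
  by (simp add: le_mod_geq)

lemma mult_eq_self_iff: "x < 2 * n \<Longrightarrow> y < 2 * n \<Longrightarrow> mult x y = x mod n \<longleftrightarrow> y = x"
  using mult_left_cancel_iff[of x y x] mult_self by simp

lemma ldiv_eq_left_iff: "x < 2 * n \<Longrightarrow> w < 2 * n \<Longrightarrow> ldiv x w = x \<longleftrightarrow> w = x mod n"
  using ldiv_eq_iff[of x x w] mult_self by auto

lemma mod_ldiv_neq:
  assumes "x < 2 * n" "y < 2 * n" "x \<noteq> y mod n"
  shows "x \<noteq> ldiv y x mod n"
proof
  assume "x = ldiv y x mod n"
  then have "mult (ldiv y x) y = mult (ldiv y x) (ldiv y x)"
    using assms mult_ldiv[of y x] mult_commute ldiv_closed mult_self by simp
  then have "ldiv y x = y" using assms mult_left_cancel[of "ldiv y x" y "ldiv y x"] ldiv_closed by simp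
  then show False using assms mult_ldiv[of y x] mult_self by simp
qed

text \<open>The points are \<open>Some (x, i)\<close> for \<open>x < 2n\<close>, \<open>i < 3\<close>, and a point at infinity \<open>None\<close>.
  The blocks are \<open>{(x, 0), (x, 1), (x, 2)}\<close> and \<open>{\<infinity>, (x + n, i), (x, i + 1)}\<close> for \<open>x < n\<close>, and
  \<open>{(x, i), (y, i), (x \<cdot> y, i + 1)}\<close> for \<open>x \<noteq> y\<close>, indices taken modulo 3.
  \<open>skolem_adjacent x y i\<close> is the third point of the block through \<open>(x, i)\<close> and \<open>(y, i + 1)\<close>.\<close>

definition skolem_infty :: "nat \<times> nat \<Rightarrow> (nat \<times> nat) option" where
  "skolem_infty = (\<lambda>(w, j). if n \<le> w then Some (w - n, (j + 1) mod 3) else Some (w + n, (j + 2) mod 3))"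

definition skolem_adjacent :: "nat \<Rightarrow> nat \<Rightarrow> nat \<Rightarrow> (nat \<times> nat) option" where
  "skolem_adjacent x y i =
     (if y = x mod n then (if x < n then Some (x, (i + 2) mod 3) else None) else Some (ldiv x y, i))"

definition skolem_third :: "(nat \<times> nat) option \<Rightarrow> (nat \<times> nat) option \<Rightarrow> (nat \<times> nat) option" where
  "skolem_third a b = (case (a, b) of
      (Some (x, i), Some (y, j)) \<Rightarrow>
        if i = j then Some (mult x y, (i + 1) mod 3)
        else if j = (i + 1) mod 3 then skolem_adjacent x y i
        else skolem_adjacent y x j
    | (Some p, None) \<Rightarrow> skolem_infty p
    | (None, Some p) \<Rightarrow> skolem_infty p
    | (None, None) \<Rightarrow> None)"

definition skolem_points :: "(nat \<times> nat) option set" where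
  "skolem_points = insert None (Some ` ({..<2 * n} \<times> {0, 1, 2}))"

lemma skolem_points_iff [simp]:
  "None \<in> skolem_points" "Some (x, i) \<in> skolem_points \<longleftrightarrow> x < 2 * n \<and> i \<in> {0, 1, 2}"
  by (auto simp: skolem_points_def)

lemma card_skolem_points: "card skolem_points = 6 * n + 1"
  by (simp add: skolem_points_def card_image card_cartesian_product)

lemma skolem_third_simps:
  "skolem_third (Some (x, i)) (Some (y, j)) =
     (if i = j then Some (mult x y, (i + 1) mod 3)
      else if j = (i + 1) mod 3 then skolem_adjacent x y i
      else skolem_adjacent y x j)"
  "skolem_third (Some (x, i)) None = skolem_infty (x, i)"
  "skolem_third None (Some (x, i)) = skolem_infty (x, i)"
  by (simp_all add: skolem_third_def)

lemma skolem_third_third_finite: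
  assumes "x < 2 * n" "y < 2 * n" "i \<in> {0, 1, 2}" "j \<in> {0, 1, 2}" "(x, i) \<noteq> (y, j)"
  shows "skolem_third (Some (x, i)) (skolem_third (Some (x, i)) (Some (y, j))) = Some (y, j)"
proof -
  note simps = skolem_third_simps skolem_adjacent_def skolem_infty_def
  consider "i = j" | "j = (i + 1) mod 3" | "i = (j + 1) mod 3"
    using assms(3,4) by auto
  then show ?thesis
  proof cases
    case 1
    then have "x \<noteq> y" using assms by simp
    with 1 show ?thesis using assms unfolding insert_iff empty_iff
      by (elim disjE) (simp_all add: simps mult_closed ldiv_mult mult_eq_self_iff)
  next
    case 2
    consider "y = x mod n" "x < n" | "y = x mod n" "n \<le> x" | "y \<noteq> x mod n" by linarith
    then show ?thesis
    proof cases
      case 1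
      then have "x = y" by simp
      from 1 2 show ?thesis using assms(3,4) unfolding insert_iff empty_iff
        by (elim disjE) (simp_all add: simps \<open>x = y\<close>)
    next
      case 2
      then have "y = x - n" by (simp add: mod_eq_diff assms)
      with \<open>n \<le> x\<close> \<open>j = (i + 1) mod 3\<close> show ?thesis using assms unfolding insert_iff empty_iff
        by (elim disjE) (simp_all add: simps mod_eq_diff)
    next
      case 3
      with 2 show ?thesis using assms unfolding insert_iff empty_iff
        by (elim disjE) (simp_all add: simps mult_ldiv ldiv_closed ldiv_eq_left_iff)
    qed
  next
    case 3
    consider "x = y mod n" "y < n" | "x = y mod n" "n \<le> y" | "x \<noteq> y mod n" by linarith
    then show ?thesis
    proof cases
      case 1
      then have "x = y" by simp
      from 1 3 show ?thesis using assms(3,4) unfolding insert_iff empty_iff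
        by (elim disjE) (simp_all add: simps \<open>x = y\<close>)
    next
      case 2
      then have "x = y - n" by (simp add: mod_eq_diff assms)
      with \<open>n \<le> y\<close> \<open>i = (j + 1) mod 3\<close> show ?thesis using assms unfolding insert_iff empty_iff
        by (elim disjE) (simp_all add: simps mod_eq_diff)
    next
      case 3
      with \<open>i = (j + 1) mod 3\<close> show ?thesis using assms mod_ldiv_neq[of x y] unfolding insert_iff empty_iff
        by (elim disjE) (simp_all add: simps ldiv_closed ldiv_ldiv)
    qed
  qed
qed

lemma skolem_point_pair_cases [consumes 3, case_names infty_left infty_right finite]:
  assumes ab: "a \<in> skolem_points" "b \<in> skolem_points" "a \<noteq> b"
  obtains (infty_left) w j where "a = None" "b = Some (w, j)" "w < 2 * n" "j \<in> {0, 1, 2}"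
    | (infty_right) w j where "a = Some (w, j)" "b = None" "w < 2 * n" "j \<in> {0, 1, 2}"
    | (finite) x i y j where "a = Some (x, i)" "b = Some (y, j)" "x < 2 * n" "y < 2 * n"
        "i \<in> {0, 1, 2}" "j \<in> {0, 1, 2}" "(x, i) \<noteq> (y, j)"
proof (cases a)
  case None
  with ab obtain w j where "b = Some (w, j)" "w < 2 * n" "j \<in> {0, 1, 2}"
    unfolding skolem_points_def by auto
  with None show thesis by (rule infty_left)
next
  case (Some p)
  with ab obtain x i where a: "a = Some (x, i)" "x < 2 * n" "i \<in> {0, 1, 2}"
    unfolding skolem_points_def by auto
  show thesis
  proof (cases b)
    case None
    with a show thesis by (intro infty_right) auto
  next
    case (Some q)
    with ab obtain y j where "b = Some (y, j)" "y < 2 * n" "j \<in> {0, 1, 2}"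
      unfolding skolem_points_def by auto
    with a ab(3) show thesis by (intro finite[of x i y j]) auto
  qed
qed

theorem steiner_triple_system_skolem: "steiner_triple_system skolem_points skolem_third"
proof
  fix a b assume "a \<in> skolem_points" "b \<in> skolem_points" "a \<noteq> b"
  then have "skolem_third a b \<in> skolem_points \<and> skolem_third a b \<noteq> a \<and>
    skolem_third a b = skolem_third b a \<and> skolem_third a (skolem_third a b) = b"
  proof (cases rule: skolem_point_pair_cases)
    case infty_left
    then show ?thesis unfolding insert_iff empty_iff
      by (elim disjE) (auto simp: skolem_third_simps skolem_infty_def)
  next
    case infty_right
    then show ?thesis using n_pos unfolding insert_iff empty_iff
      by (elim disjE) (auto simp: skolem_third_simps skolem_infty_def
          skolem_adjacent_def mod_eq_diff)
  next
    case finite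
    have "skolem_third a b \<in> skolem_points \<and> skolem_third a b \<noteq> a \<and> skolem_third a b = skolem_third b a"
      using finite(3-7) unfolding finite(1,2) insert_iff empty_iff
      by (elim disjE) (simp_all add: skolem_third_simps skolem_adjacent_def
          mult_less ldiv_less mult_commute ldiv_eq_left_iff)
    moreover have "skolem_third a (skolem_third a b) = b"
      unfolding finite(1,2) using finite(3-7) by (rule skolem_third_third_finite)
    ultimately show ?thesis by blast
  qed
  then show "skolem_third a b \<in> skolem_points" "skolem_third a b \<noteq> a"
    "skolem_third a b = skolem_third b a" "skolem_third a (skolem_third a b) = b"
    by blast+
qed (simp add: skolem_points_def)

end

definition half_mod :: "nat \<Rightarrow> nat \<Rightarrow> nat" where
  "half_mod n s = (if even s then s div 2 else n + s div 2)"

definition skolem_mult :: "nat \<Rightarrow> nat \<Rightarrow> nat \<Rightarrow> nat" where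
  "skolem_mult n x y = half_mod n ((x + y) mod (2 * n))"

lemma half_mod_less: "s < 2 * n \<Longrightarrow> half_mod n s < 2 * n"
  by (auto simp: half_mod_def)

lemma half_mod_inj: "s < 2 * n \<Longrightarrow> t < 2 * n \<Longrightarrow> half_mod n s = half_mod n t \<Longrightarrow> s = t"
  by (auto simp: half_mod_def split: if_splits elim!: evenE oddE)

lemma half_idempotent_comm_quasigroup_skolem_mult:
  assumes "0 < n"
  shows "half_idempotent_comm_quasigroup n (skolem_mult n)"
proof
  fix x y z assume "x \<in> {..<2 * n}" "y \<in> {..<2 * n}"
  then show "skolem_mult n x y \<in> {..<2 * n}"
    using assms by (simp add: skolem_mult_def half_mod_less)
  show "skolem_mult n x y = skolem_mult n y x" by (simp add: skolem_mult_def add.commute)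
  assume "z \<in> {..<2 * n}" "skolem_mult n x y = skolem_mult n x z"
  then have "half_mod n ((x + y) mod (2 * n)) = half_mod n ((x + z) mod (2 * n))"
    unfolding skolem_mult_def by blast
  then have "(x + y) mod (2 * n) = (x + z) mod (2 * n)"
    by (rule half_mod_inj[rotated 2]) (simp_all add: assms)
  then show "y = z"
    using \<open>y \<in> {..<2 * n}\<close> \<open>z \<in> {..<2 * n}\<close>
    by (simp flip: cong_def add: cong_add_lcancel_nat cong_less_modulus_unique_nat)
next
  fix x :: nat
  have "(x + x) mod (2 * n) = 2 * (x mod n)" by (simp flip: mult_2 mult_mod_right)
  then show "skolem_mult n x x = x mod n" by (simp add: skolem_mult_def half_mod_def)
qed (simp_all add: assms)

section \<open>The equiangular tight frame of a Steiner triple system\<close>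

lemma of_real_sqrt_mult_self [simp]: "0 \<le> a \<Longrightarrow> complex_of_real (sqrt a) * of_real (sqrt a) = of_real a"
  by (simp flip: of_real_mult)

lemma if_zero_simps:
  fixes a b :: complex
  shows "(if P then a else 0) * b = (if P then a * b else 0)"
    and "b * (if P then a else 0) = (if P then b * a else 0)"
    and "cnj (if P then a else 0) = (if P then cnj a else 0)"
    and "(if P then a else 0) / b = (if P then a / b else 0)"
    and "(if P then (if Q then a else 0) else 0) = (if P \<and> Q then a else 0)"
    and "(\<Sum>x\<in>A. if P then f x else 0) = (if P then sum f A else 0)"
  by simp_all

locale enumerated_steiner_triple_system = steiner_triple_system +
  fixes idx :: "'a \<Rightarrow> 'a set \<Rightarrow> nat" and label :: "'a \<Rightarrow> nat"
  assumes bij_idx: "p \<in> S \<Longrightarrow> bij_betw (idx p) (blocks_through p) {1..<Suc replication}"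
    and bij_label: "bij_betw label S {..<card S}"
    and points_nonempty: "S \<noteq> {}"
begin

declare sum.lessThan_Suc [simp del]

abbreviation K :: nat where "K \<equiv> Suc replication"
abbreviation L :: nat where "L \<equiv> Suc (card S)"

lemma L_eq: "L = 2 * K"
  using card_points[OF points_nonempty] by simp

text \<open>Coordinates: \<open>Inl B\<close> for a block, \<open>Inr None\<close> for \<open>\<infinity>\<close> and \<open>Inr (Some q)\<close> for a point.
  Vectors: \<open>Inl (p, j)\<close> for a point and \<open>j < K\<close>, and \<open>Inr k\<close> for \<open>k < L\<close>.\<close>

definition coords :: "('a set + 'a option) set" where
  "coords = blocks <+> insert None (Some ` S)"

definition vecs :: "('a \<times> nat + nat) set" where
  "vecs = (S \<times> {..<K}) <+> {..<L}"

fun frame_vec :: "'a \<times> nat + nat \<Rightarrow> 'a set + 'a option \<Rightarrow> complex" where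
  "frame_vec (Inl (p, j)) (Inl B) = (if p \<in> B then dft K (idx p B) j else 0)"
| "frame_vec (Inl (p, j)) (Inr None) = 0"
| "frame_vec (Inl (p, j)) (Inr (Some q)) = (if q = p then of_real (sqrt 2) else 0)"
| "frame_vec (Inr k) (Inl B) = 0"
| "frame_vec (Inr k) (Inr None) = of_real (sqrt (3 / 2)) * dft L (card S) k"
| "frame_vec (Inr k) (Inr (Some q)) = dft L (label q) k / of_real (sqrt 2)"

definition gram :: "'a \<times> nat + nat \<Rightarrow> 'a \<times> nat + nat \<Rightarrow> complex" where
  "gram y y' = (\<Sum>x\<in>coords. frame_vec y x * cnj (frame_vec y' x))"

definition frame :: "'a set + 'a option \<Rightarrow> 'a set + 'a option \<Rightarrow> complex" where
  "frame x x' = (\<Sum>y\<in>vecs. frame_vec y x * cnj (frame_vec y x'))"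

lemma finite_coords: "finite coords"
  by (simp add: coords_def finite_blocks finite_points)

lemma finite_vecs: "finite vecs"
  by (simp add: vecs_def finite_points)

lemma card_coords: "card coords = card blocks + card S + 1"
  by (simp add: coords_def card_Plus finite_blocks finite_points card_image)

lemma card_vecs: "card vecs = card S * K + L"
  by (simp add: vecs_def card_Plus finite_points card_cartesian_product)

lemma coords_cases [consumes 1, case_names block infty point]:
  assumes "x \<in> coords"
  obtains B where "B \<in> blocks" "x = Inl B" | "x = Inr None" | q where "q \<in> S" "x = Inr (Some q)"
  using assms unfolding coords_def by blast

lemma vecs_cases [consumes 1, case_names point fourier]:
  assumes "y \<in> vecs"
  obtains p j where "p \<in> S" "j < K" "y = Inl (p, j)" | k where "k < L" "y = Inr k"
  using assms unfolding vecs_def by blast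

lemma sum_coords:
  "(\<Sum>x\<in>coords. f x) = (\<Sum>B\<in>blocks. f (Inl B)) + f (Inr None) + (\<Sum>q\<in>S. f (Inr (Some q)))"
  by (simp add: coords_def sum.Plus finite_blocks finite_points sum.reindex add.assoc)

lemma sum_vecs: "(\<Sum>y\<in>vecs. f y) = (\<Sum>p\<in>S. \<Sum>j<K. f (Inl (p, j))) + (\<Sum>k<L. f (Inr k))"
  by (simp add: vecs_def sum.Plus finite_points sum.cartesian_product' del: sum.lessThan_Suc)

lemma idx_less: "p \<in> S \<Longrightarrow> B \<in> blocks_through p \<Longrightarrow> idx p B < K"
  and idx_pos: "p \<in> S \<Longrightarrow> B \<in> blocks_through p \<Longrightarrow> 0 < idx p B"
  using bij_betwE[OF bij_idx] by fastforce+

lemma idx_eq_iff: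
  "p \<in> S \<Longrightarrow> B \<in> blocks_through p \<Longrightarrow> B' \<in> blocks_through p \<Longrightarrow> idx p B = idx p B' \<longleftrightarrow> B = B'"
  using bij_betw_imp_inj_on[OF bij_idx] by (auto dest: inj_onD)

lemma label_less: "q \<in> S \<Longrightarrow> label q < card S"
  using bij_betwE[OF bij_label] by blast

lemma label_eq_iff: "q \<in> S \<Longrightarrow> q' \<in> S \<Longrightarrow> label q = label q' \<longleftrightarrow> q = q'"
  using bij_betw_imp_inj_on[OF bij_label] by (auto dest: inj_onD)

lemma sum_point_coords:
  assumes "p \<in> S" "q \<in> S"
  shows "(\<Sum>x\<in>S. (if x = p then a else 0) * cnj (if x = q then b else 0)) = (if p = q then a * cnj b else 0)"
  using assms finite_points by (simp add: if_zero_simps sum.delta cong: if_cong)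

lemma gram_points:
  assumes "p \<in> S" "q \<in> S"
  shows "gram (Inl (p, j)) (Inl (q, j')) =
    (\<Sum>B\<in>{B \<in> blocks. p \<in> B \<and> q \<in> B}. dft K (idx p B) j * cnj (dft K (idx q B) j')) +
    (if p = q then 2 else 0)"
  using assms finite_blocks finite_points
  by (simp add: gram_def sum_coords sum_point_coords sum.inter_filter if_zero_simps conj_commute cong: if_cong)

lemma gram_same_point:
  assumes "p \<in> S" "j < K" "j' < K"
  shows "gram (Inl (p, j)) (Inl (p, j')) = (if j = j' then of_nat K else 0) + 1"
proof -
  have "(\<Sum>B\<in>blocks_through p. dft K (idx p B) j * cnj (dft K (idx p B) j')) =
      (\<Sum>a\<in>{1..<K}. dft K a j * cnj (dft K a j'))"
    by (rule sum.reindex_bij_betw[OF bij_idx[OF assms(1)]])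
  also have "\<dots> = (if j = j' then of_nat K else 0) - 1"
    using assms(2,3) by (rule dft_orthogonal_nonzero_rows)
  finally show ?thesis
    using assms(1) by (simp add: gram_points blocks_through_def)
qed

lemma norm_gram_distinct_points:
  assumes "p \<in> S" "q \<in> S" "p \<noteq> q"
  shows "norm (gram (Inl (p, j)) (Inl (q, j'))) = 1"
  using assms by (simp add: gram_points blocks_through_pair norm_mult)

lemma gram_point_fourier:
  assumes "p \<in> S"
  shows "gram (Inl (p, j)) (Inr k) = cnj (dft L (label p) k)"
  using assms finite_points by (simp add: gram_def sum_coords if_zero_simps sum.delta cong: if_cong)

lemma gram_fouriers:
  assumes "k < L" "k' < L"
  shows "gram (Inr k) (Inr k') = (if k = k' then of_nat L / 2 else 0) + dft L (card S) k * cnj (dft L (card S) k')"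
proof -
  let ?T = "\<lambda>a. dft L a k * cnj (dft L a k')"
  have "(\<Sum>q\<in>S. ?T (label q)) = (\<Sum>a<card S. ?T a)"
    by (rule sum.reindex_bij_betw[OF bij_label])
  also have "\<dots> = (\<Sum>a<L. ?T a) - ?T (card S)"
    by (simp add: sum.lessThan_Suc)
  also have "(\<Sum>a<L. ?T a) = (if k = k' then of_nat L else 0)"
    using dft_orthogonal[OF assms] by (simp add: dft_commute)
  finally have points: "(\<Sum>q\<in>S. ?T (label q)) = (if k = k' then of_nat L else 0) - ?T (card S)" .
  have "gram (Inr k) (Inr k') = (\<Sum>q\<in>S. ?T (label q)) / 2 + 3 / 2 * ?T (card S)"
    by (simp add: gram_def sum_coords sum_divide_distrib field_simps)
  also have "\<dots> = (if k = k' then of_nat L else 0) / 2 + ?T (card S)"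
    unfolding points by (simp add: field_simps)
  finally show ?thesis by simp
qed

lemma frame_blocks:
  assumes "B \<in> blocks" "B' \<in> blocks"
  shows "frame (Inl B) (Inl B') = (if B = B' then 3 * of_nat K else 0)"
proof -
  have "(\<Sum>j<K. frame_vec (Inl (p, j)) (Inl B) * cnj (frame_vec (Inl (p, j)) (Inl B'))) =
      (if p \<in> B \<and> B = B' then of_nat K else 0)" if "p \<in> S" for p
  proof (cases "p \<in> B \<and> p \<in> B'")
    case True
    then have "B \<in> blocks_through p" "B' \<in> blocks_through p"
      using assms by (simp_all add: blocks_through_def)
    then show ?thesis
      using that True dft_orthogonal[OF idx_less idx_less] by (simp add: idx_eq_iff)
  qed auto
  then have "frame (Inl B) (Inl B') = (\<Sum>p\<in>S. if p \<in> B \<and> B = B' then of_nat K else 0)"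
    by (simp add: frame_def sum_vecs)
  also have "\<dots> = (if B = B' then 3 * of_nat K else 0)"
  proof (cases "B = B'")
    case True
    have "{p \<in> S. p \<in> B} = B" using blocks_subset[OF assms(1)] by auto
    then show ?thesis
      using True card_block[OF assms(1)] finite_points by (simp flip: sum.inter_filter)
  qed simp
  finally show ?thesis .
qed

lemma frame_block_infty: "frame (Inl B) (Inr None) = 0"
  by (simp add: frame_def sum_vecs)

lemma frame_infty: "frame (Inr None) (Inr None) = 3 * of_nat K"
proof -
  have "frame (Inr None) (Inr None) = of_nat L * 3 / 2"
    by (simp add: frame_def sum_vecs mult_ac flip: of_real_mult)
  also have "\<dots> = 3 * of_nat K" unfolding L_eq by simp
  finally show ?thesis .
qed

lemma frame_point_column:
  assumes "q \<in> S"
  shows "frame x (Inr (Some q)) =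
    (\<Sum>j<K. frame_vec (Inl (q, j)) x * of_real (sqrt 2)) + (\<Sum>k<L. frame_vec (Inr k) x * cnj (dft L (label q) k)) / of_real (sqrt 2)"
  using assms finite_points
  by (simp add: frame_def sum_vecs if_zero_simps sum.delta sum_divide_distrib cong: if_cong)

lemma frame_block_point:
  assumes "B \<in> blocks" "q \<in> S"
  shows "frame (Inl B) (Inr (Some q)) = 0"
proof -
  have "(\<Sum>j<K. dft K (idx q B) j) = 0" if "q \<in> B"
    using that assms idx_pos idx_less by (intro sum_dft_row) (simp_all add: blocks_through_def)
  then show ?thesis
    using assms by (simp add: frame_point_column if_zero_simps flip: sum_distrib_right cong: if_cong)
qed

lemma frame_infty_point:
  assumes "q \<in> S"
  shows "frame (Inr None) (Inr (Some q)) = 0"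
proof -
  have "(\<Sum>k<L. dft L (card S) k * cnj (dft L (label q) k)) = 0"
    using dft_orthogonal[of "card S" L "label q"] label_less[OF assms] by simp
  then show ?thesis
    using assms by (simp add: frame_point_column mult.assoc flip: sum_distrib_left)
qed

lemma frame_points:
  assumes "q \<in> S" "q' \<in> S"
  shows "frame (Inr (Some q)) (Inr (Some q')) = (if q = q' then 3 * of_nat K else 0)"
proof -
  have "(\<Sum>k<L. dft L (label q) k * cnj (dft L (label q') k)) = (if q = q' then of_nat L else 0)"
    using dft_orthogonal[of "label q" L "label q'"] label_less[OF assms(1)] label_less[OF assms(2)]
    by (simp add: label_eq_iff[OF assms])
  then have "frame (Inr (Some q)) (Inr (Some q')) = (if q = q' then 2 * of_nat K + of_nat L / 2 else 0)"
    using assms by (simp add: frame_point_column if_zero_simps sum_divide_distrib[symmetric] cong: if_cong)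
  then show ?thesis by (simp add: L_eq)
qed

lemma gram_swap: "gram y' y = cnj (gram y y')"
  by (simp add: gram_def mult.commute)

lemma frame_swap: "frame x' x = cnj (frame x x')"
  by (simp add: frame_def mult.commute)

lemma gram_diag:
  assumes "y \<in> vecs"
  shows "gram y y = of_nat K + 1"
  using assms
proof (cases rule: vecs_cases)
  case (fourier k)
  then show ?thesis by (simp add: gram_fouriers L_eq)
qed (simp add: gram_same_point)

lemma norm_gram_offdiag:
  assumes "y \<in> vecs" "y' \<in> vecs" "y \<noteq> y'"
  shows "norm (gram y y') = 1"
  using assms(1)
proof (cases rule: vecs_cases)
  case (point p j)
  from assms(2) show ?thesis
  proof (cases rule: vecs_cases)
    case (point q j')
    then show ?thesis
      using \<open>y = Inl (p, j)\<close> \<open>p \<in> S\<close> \<open>j < K\<close> assms(3)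
      by (cases "p = q") (simp_all add: gram_same_point norm_gram_distinct_points)
  next
    case (fourier k)
    then show ?thesis using point by (simp add: gram_point_fourier)
  qed
next
  case (fourier k)
  from assms(2) show ?thesis
  proof (cases rule: vecs_cases)
    case (point q j')
    then show ?thesis using fourier by (simp add: gram_swap[of "Inr k"] gram_point_fourier)
  next
    case (fourier k')
    then show ?thesis using \<open>y = Inr k\<close> \<open>k < L\<close> assms(3) by (simp add: gram_fouriers norm_mult)
  qed
qed

lemma frame_eq:
  assumes "x \<in> coords" "x' \<in> coords"
  shows "frame x x' = (if x = x' then 3 * of_nat K else 0)"
  using assms(1)
proof (cases rule: coords_cases)
  case (block B)
  from assms(2) show ?thesis
    by (cases rule: coords_cases) (simp_all add: block frame_blocks frame_block_infty frame_block_point)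
next
  case infty
  from assms(2) show ?thesis
  proof (cases rule: coords_cases)
    case (block B)
    then show ?thesis using infty frame_swap[of x x'] by (simp add: frame_block_infty)
  qed (simp_all add: infty frame_infty frame_infty_point)
next
  case (point q)
  from assms(2) show ?thesis
  proof (cases rule: coords_cases)
    case (block B)
    then show ?thesis using point frame_swap[of x x'] by (simp add: frame_block_point)
  next
    case infty
    then show ?thesis using point frame_swap[of x x'] by (simp add: frame_infty_point)
  qed (simp_all add: point frame_points)
qed

lemma ETF_on_frame_vec: "ETF_on coords vecs frame_vec"
proof -
  have "\<exists>x\<in>coords. frame_vec y x \<noteq> 0" if "y \<in> vecs" for y
    using that
  proof (cases rule: vecs_cases)
    case (point p j)
    then show ?thesis by (intro bexI[of _ "Inr (Some p)"]) (auto simp: coords_def)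
  next
    case (fourier k)
    then show ?thesis by (intro bexI[of _ "Inr None"]) (auto simp: coords_def)
  qed
  then show ?thesis
    using gram_diag norm_gram_offdiag frame_eq unfolding ETF_on_def gram_def frame_def by blast
qed

end

lemma (in steiner_triple_system) ex_ETF:
  assumes "S \<noteq> {}"
  shows "\<exists>phi. is_ETF ((card S + 2) * (card S + 3) div 6) ((card S + 1) * (card S + 2) div 2) phi"
proof -
  have "\<forall>p\<in>S. \<exists>f. bij_betw f (blocks_through p) {1..<Suc replication}"
    using finite_blocks card_blocks_through by (intro ballI finite_same_card_bij) (simp_all add: blocks_through_def)
  then obtain idx where "\<forall>p\<in>S. bij_betw (idx p) (blocks_through p) {1..<Suc replication}"
    by metis
  moreover obtain label where "bij_betw label S {..<card S}"
    using ex_bij_betw_finite_nat[OF finite_points] by (auto simp: atLeast0LessThan)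
  ultimately interpret enumerated_steiner_triple_system S third idx label
    using assms by unfold_locales blast+
  have "(card S + 2) * (card S + 3) = 6 * card coords"
    using card_blocks card_points[OF assms] by (simp add: card_coords algebra_simps)
  moreover have "(card S + 1) * (card S + 2) = 2 * card vecs"
    using card_points[OF assms] by (simp add: card_vecs algebra_simps)
  ultimately show ?thesis
    using is_ETF_if_ETF_on[OF finite_coords finite_vecs ETF_on_frame_vec] by simp
qed

theorem corollary3p2:
  fixes V :: nat
  assumes "V \<ge> 3" and "V mod 6 = 1 \<or> V mod 6 = 3"
  shows "\<exists>phi. is_ETF ((V + 2) * (V + 3) div 6) ((V + 1) * (V + 2) div 2) phi"
  using assms(2)
proof
  assume "V mod 6 = 1"
  define n where "n = V div 6"
  have V: "V = 6 * n + 1" and "0 < n" using \<open>V mod 6 = 1\<close> assms(1) unfolding n_def by presburger+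
  interpret half_idempotent_comm_quasigroup n "skolem_mult n"
    using \<open>0 < n\<close> by (rule half_idempotent_comm_quasigroup_skolem_mult)
  have "card skolem_points = V" using V by (simp add: card_skolem_points)
  moreover have "None \<in> skolem_points" by simp
  ultimately show ?thesis
    using steiner_triple_system.ex_ETF[OF steiner_triple_system_skolem] by (metis empty_iff)
next
  assume "V mod 6 = 3"
  define m where "m = 2 * (V div 6) + 1"
  have V: "V = 3 * m" using \<open>V mod 6 = 3\<close> unfolding m_def by presburger
  interpret idempotent_comm_quasigroup "{..<m}" "midpoint_mod m"
    by (rule idempotent_comm_quasigroup_midpoint_mod) (simp add: m_def)
  have "card ({..<m} \<times> {0::nat, 1, 2}) = V" using V by (simp add: card_cartesian_product)
  moreover have "(0, 0) \<in> {..<m} \<times> {0::nat, 1, 2}" by (simp add: m_def)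
  ultimately show ?thesis
    using steiner_triple_system.ex_ETF[OF steiner_triple_system_bose] by (metis empty_iff)
qed

end
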